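(* Let $\mathcal S$ be a trajectory set satisfying $\bar\sigma(0)\ge0$. Then the hedging price integral in the sense of Leinert $\int_{(L)}:\mathcal L^1_{(L)}\to\mathbb R$ is linear, positive (i.e. $\int_{(L)}f\ge0$ whenever $f\in\mathcal L^1_{(L)}$ and $f\ge0$ on $\mathcal S$), continuous with respect to $\|\cdot\|$, and constant-preserving (i.e. $\int_{(L)}c=c$ for every constant function $c\in\mathbb R$).
   Context: Fix $s_0\in\mathbb R$. A trajectory set is any set $\mathcal S$ of real sequences $S=(S_j)_{j\in\mathbb N_0}$ with $S_0=s_0$. A simple portfolio $(V,n,H)$ consists of $V\in\mathbb R$, $n\in\mathbb N$ and nonanticipating functions $H_i:\mathcal S\to\mathbb R$, $0\le i\le n-1$ (i.e. $H_i(S)=h_i(S_0,\dots,S_i)$ for some arbitrary $h_i:\mathbb R^{i+1}\to\mathbb R$). Its wealth is $\Pi^{V,n,H}_j(S)=V+\sum_{i=0}^{\min\{j,n\}-1}H_i(S)(S_{i+1}-S_i)$ and $\Pi^{V,n,H}_\infty:=\Pi^{V,n,H}_n$; it is positive if $V\ge0$ and $\Pi^{V,n,H}_\infty\ge0$ on $\mathcal S$. A generalized portfolio is a sequence $(V_m,n_m,H_m)_{m\in\mathbb N_0}$ of simple portfolios, positive for every $m\ge1$; it is a positive generalized portfolio if moreover $\Pi^{V_0,n_0,H_0}_j\equiv0$ for all $j$. A map $f:\mathcal S\to[-\infty,+\infty]$ is superhedged with initial endowment $V=\sum_{m=0}^\infty V_m\in(-\infty,+\infty]$ by such a portfolio if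 $f\le\sum_{m=0}^\infty\Pi^{V_m,n_m,H_m}_\infty$ on $\mathcal S$. For $f\ge0$, $\bar I(f)$ is the infimum of initial endowments of positive generalized portfolios superhedging $f$; $\bar\sigma(f)$ is the infimum of initial endowments of generalized portfolios superhedging $f$. Let $\mathcal E=\{\Pi^{V,n,H}_\infty\}$ (over all simple portfolios). Under $\bar\sigma(0)\ge0$, the map $I(\Pi^{V,n,H}_\infty):=V$ is a well-defined linear functional on $\mathcal E$. Define $\|f\|:=\bar I(|f|)$ for $f:\mathcal S\to[-\infty,+\infty]$; let $\mathcal F$ be the space of real-valued $f$ with $\|f\|<\infty$ (a complete seminormed space) and $\mathcal E'=\{f\in\mathcal E:\|f\|<\infty\}$. Under $\bar\sigma(0)\ge0$, $I$ restricted to $\mathcal E'$ is continuous for $\|\cdot\|$; $\mathcal L^1_{(L)}$ denotes the closure of $\mathcal E'$ in $\mathcal F$ with respect to $\|\cdot\|$, and $\int_{(L)}$ the unique $\|\cdot\|$-continuous linear extension of $I|_{\mathcal E'}$ to $\mathcal L^1_{(L)}$. *)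

theory Defs
  imports "HOL-Analysis.Analysis"
begin

type_synonym traj = "nat \<Rightarrow> real"

definition trajectory_set :: "real \<Rightarrow> traj set \<Rightarrow> bool" where
  "trajectory_set s0 \<S> \<longleftrightarrow> (\<forall>S\<in>\<S>. S 0 = s0)"

definition nonanticipating :: "traj set \<Rightarrow> nat \<Rightarrow> (nat \<Rightarrow> traj \<Rightarrow> real) \<Rightarrow> bool" where
  "nonanticipating \<S> n H \<longleftrightarrow>
     (\<forall>i<n. \<forall>S\<in>\<S>. \<forall>S'\<in>\<S>. (\<forall>j\<le>i. S j = S' j) \<longrightarrow> H i S = H i S')"

text \<open>(V,n,H) is a simple portfolio (V is an arbitrary real), n in {1,2,...}.\<close>
definition simple_portfolio :: "traj set \<Rightarrow> nat \<Rightarrow> (nat \<Rightarrow> traj \<Rightarrow> real) \<Rightarrow> bool" where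
  "simple_portfolio \<S> n H \<longleftrightarrow> n \<ge> 1 \<and> nonanticipating \<S> n H"

definition wealth :: "real \<Rightarrow> nat \<Rightarrow> (nat \<Rightarrow> traj \<Rightarrow> real) \<Rightarrow> nat \<Rightarrow> traj \<Rightarrow> real" where
  "wealth V n H j S = V + (\<Sum>i<min j n. H i S * (S (Suc i) - S i))"

definition wealth_inf :: "real \<Rightarrow> nat \<Rightarrow> (nat \<Rightarrow> traj \<Rightarrow> real) \<Rightarrow> traj \<Rightarrow> real" where
  "wealth_inf V n H S = wealth V n H n S"

definition positive_sp :: "traj set \<Rightarrow> real \<Rightarrow> nat \<Rightarrow> (nat \<Rightarrow> traj \<Rightarrow> real) \<Rightarrow> bool" where
  "positive_sp \<S> V n H \<longleftrightarrow> V \<ge> 0 \<and> (\<forall>S\<in>\<S>. wealth_inf V n H S \<ge> 0)"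

definition gen_portfolio ::
  "traj set \<Rightarrow> (nat \<Rightarrow> real) \<Rightarrow> (nat \<Rightarrow> nat) \<Rightarrow> (nat \<Rightarrow> nat \<Rightarrow> traj \<Rightarrow> real) \<Rightarrow> bool" where
  "gen_portfolio \<S> V n H \<longleftrightarrow>
     (\<forall>m. simple_portfolio \<S> (n m) (H m)) \<and> (\<forall>m\<ge>1. positive_sp \<S> (V m) (n m) (H m))"

definition pos_gen_portfolio ::
  "traj set \<Rightarrow> (nat \<Rightarrow> real) \<Rightarrow> (nat \<Rightarrow> nat) \<Rightarrow> (nat \<Rightarrow> nat \<Rightarrow> traj \<Rightarrow> real) \<Rightarrow> bool" where
  "pos_gen_portfolio \<S> V n H \<longleftrightarrow>
     gen_portfolio \<S> V n H \<and> (\<forall>j. \<forall>S\<in>\<S>. wealth (V 0) (n 0) (H 0) j S = 0)"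

text \<open>Initial endowment V_0 + sum_{m\<ge>1} V_m in (-inf, +inf] (terms for m \<ge> 1 are \<ge> 0).\<close>
definition endowment :: "(nat \<Rightarrow> real) \<Rightarrow> ereal" where
  "endowment V = ereal (V 0) + (\<Sum>m. ereal (V (Suc m)))"

definition gp_value ::
  "(nat \<Rightarrow> real) \<Rightarrow> (nat \<Rightarrow> nat) \<Rightarrow> (nat \<Rightarrow> nat \<Rightarrow> traj \<Rightarrow> real) \<Rightarrow> traj \<Rightarrow> ereal" where
  "gp_value V n H S = ereal (wealth_inf (V 0) (n 0) (H 0) S)
      + (\<Sum>m. ereal (wealth_inf (V (Suc m)) (n (Suc m)) (H (Suc m)) S))"

definition superhedges ::
  "traj set \<Rightarrow> (traj \<Rightarrow> ereal) \<Rightarrow> (nat \<Rightarrow> real) \<Rightarrow> (nat \<Rightarrow> nat) \<Rightarrow> (nat \<Rightarrow> nat \<Rightarrow> traj \<Rightarrow> real) \<Rightarrow> bool" where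
  "superhedges \<S> f V n H \<longleftrightarrow> (\<forall>S\<in>\<S>. f S \<le> gp_value V n H S)"

definition Ibar :: "traj set \<Rightarrow> (traj \<Rightarrow> ereal) \<Rightarrow> ereal" where
  "Ibar \<S> f = Inf {endowment V | V n H. pos_gen_portfolio \<S> V n H \<and> superhedges \<S> f V n H}"

definition sigma_bar :: "traj set \<Rightarrow> (traj \<Rightarrow> ereal) \<Rightarrow> ereal" where
  "sigma_bar \<S> f = Inf {endowment V | V n H. gen_portfolio \<S> V n H \<and> superhedges \<S> f V n H}"

definition in_E :: "traj set \<Rightarrow> (traj \<Rightarrow> real) \<Rightarrow> bool" where
  "in_E \<S> f \<longleftrightarrow> (\<exists>V n H. simple_portfolio \<S> n H \<and> (\<forall>S\<in>\<S>. f S = wealth_inf V n H S))"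

definition I_E :: "traj set \<Rightarrow> (traj \<Rightarrow> real) \<Rightarrow> real" where
  "I_E \<S> f = (THE V. \<exists>n H. simple_portfolio \<S> n H \<and> (\<forall>S\<in>\<S>. f S = wealth_inf V n H S))"

definition normL :: "traj set \<Rightarrow> (traj \<Rightarrow> real) \<Rightarrow> ereal" where
  "normL \<S> f = Ibar \<S> (\<lambda>S. ereal \<bar>f S\<bar>)"

definition in_E' :: "traj set \<Rightarrow> (traj \<Rightarrow> real) \<Rightarrow> bool" where
  "in_E' \<S> f \<longleftrightarrow> in_E \<S> f \<and> normL \<S> f < \<infinity>"

text \<open>L^1_(L): closure of E' in F = {f real-valued, ||f|| < inf}.\<close>
definition L1_L :: "traj set \<Rightarrow> (traj \<Rightarrow> real) \<Rightarrow> bool" where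
  "L1_L \<S> f \<longleftrightarrow> normL \<S> f < \<infinity> \<and>
     (\<forall>\<epsilon>>0. \<exists>g. in_E' \<S> g \<and> normL \<S> (\<lambda>S. f S - g S) < ereal \<epsilon>)"

text \<open>The continuous extension of I: limit of I(g_k) along g_k in E' with ||f - g_k|| \<rightarrow> 0.\<close>
definition integral_L :: "traj set \<Rightarrow> (traj \<Rightarrow> real) \<Rightarrow> real" where
  "integral_L \<S> f = (THE c. \<exists>g. (\<forall>k. in_E' \<S> (g k)) \<and>
       ((\<lambda>k. normL \<S> (\<lambda>S. f S - g k S)) \<longlonglongrightarrow> 0) \<and>
       ((\<lambda>k. I_E \<S> (g k)) \<longlonglongrightarrow> c))"

end

(*
  The hypothesis sigma_bar 0 >= 0 forbids superhedging 0 with negative initial endowment.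
  Putting the simple portfolio of an elementary g with price V in front of a positive generalized
  portfolio that superhedges h at cost x therefore gives V + x >= 0 whenever g + h >= 0 on the
  trajectories. Hence prices of elementary functions are unique, and |V - V'| <= x whenever
  |g - g'| can be superhedged at cost x. For f in L^1_(L), the elementary approximants g of f give
  intervals [V - x, V + x] (V the price of g, x a cost of superhedging |f - g|) that pairwise
  intersect and become arbitrarily short; their common point is the integral of f. Linearity,
  positivity, continuity and preservation of constants then pass from prices to the integral,
  because positive generalized portfolios are closed under nonnegative linear combinations.
*)
theory Submission
  imports Defs
begin

lemma ex_common_point_of_intervals:
  fixes P :: "real \<Rightarrow> real \<Rightarrow> bool"
  assumes overlap: "\<And>V x W y. P V x \<Longrightarrow> P W y \<Longrightarrow> V - x \<le> W + y"
    and witness: "P W y"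
  shows "\<exists>c. \<forall>V x. P V x \<longrightarrow> \<bar>c - V\<bar> \<le> x"
proof -
  define c where "c = Sup {V - x | V x. P V x}"
  have c_ge: "V - x \<le> c" if "P V x" for V x
    unfolding c_def using that witness overlap by (intro cSup_upper bdd_aboveI[of _ "W + y"]) auto
  have c_le: "c \<le> W' + y'" if "P W' y'" for W' y'
    unfolding c_def using that overlap by (intro cSup_least) auto
  show ?thesis using c_ge c_le by (metis abs_diff_le_iff add.commute diff_le_eq le_diff_eq)
qed

lemma eq_if_dist_le_mult_eps:
  fixes x y K :: real
  assumes "\<And>\<eta>. 0 < \<eta> \<Longrightarrow> \<bar>x - y\<bar> \<le> K * \<eta>"
  shows "x = y"
proof -
  have "\<bar>x - y\<bar> \<le> 0 + e" if "0 < e" for e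
  proof -
    have "\<bar>x - y\<bar> \<le> K * (e / (\<bar>K\<bar> + 1))"
      using that by (intro assms) (simp add: add_nonneg_pos)
    also have "\<dots> \<le> (\<bar>K\<bar> + 1) * (e / (\<bar>K\<bar> + 1))"
      using that by (intro mult_right_mono) auto
    also have "\<dots> = e"
      by (simp add: add_nonneg_pos)
    finally show ?thesis by simp
  qed
  then have "\<bar>x - y\<bar> \<le> 0" by (rule field_le_epsilon)
  then show ?thesis by simp
qed

lemma suminf_ereal_lincomb:
  fixes a b :: real
  assumes "0 \<le> a" "0 \<le> b" "\<And>m. 0 \<le> u m" "\<And>m. 0 \<le> v m"
  shows "(\<Sum>m. ereal (a * u m + b * v m)) = ereal a * (\<Sum>m. ereal (u m)) + ereal b * (\<Sum>m. ereal (v m))"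
proof -
  have "(\<Sum>m. ereal (a * u m + b * v m)) = (\<Sum>m. ereal a * ereal (u m) + ereal b * ereal (v m))"
    by simp
  also have "\<dots> = (\<Sum>m. ereal a * ereal (u m)) + (\<Sum>m. ereal b * ereal (v m))"
    using assms by (intro suminf_add_ereal) auto
  also have "\<dots> = ereal a * (\<Sum>m. ereal (u m)) + ereal b * (\<Sum>m. ereal (v m))"
    using assms by (simp add: suminf_cmult_ereal del: times_ereal.simps)
  finally show ?thesis .
qed

definition lincomb_strategy ::
  "real \<Rightarrow> nat \<Rightarrow> (nat \<Rightarrow> traj \<Rightarrow> real) \<Rightarrow> real \<Rightarrow> nat \<Rightarrow> (nat \<Rightarrow> traj \<Rightarrow> real) \<Rightarrow> nat \<Rightarrow> traj \<Rightarrow> real"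
  where "lincomb_strategy a n H b n' H' i S =
    a * (if i < n then H i S else 0) + b * (if i < n' then H' i S else 0)"

lemma simple_portfolio_lincomb:
  assumes "simple_portfolio \<S> n H" "simple_portfolio \<S> n' H'"
  shows "simple_portfolio \<S> (max n n') (lincomb_strategy a n H b n' H')"
proof -
  have "lincomb_strategy a n H b n' H' i S = lincomb_strategy a n H b n' H' i S'"
    if "S \<in> \<S>" "S' \<in> \<S>" "\<forall>j\<le>i. S j = S' j" for i S S'
  proof -
    have "i < n \<Longrightarrow> H i S = H i S'" "i < n' \<Longrightarrow> H' i S = H' i S'"
      using assms that unfolding simple_portfolio_def nonanticipating_def by blast+
    then show ?thesis unfolding lincomb_strategy_def by simp
  qed
  moreover have "1 \<le> max n n'" using assms by (simp add: simple_portfolio_def le_max_iff_disj)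
  ultimately show ?thesis unfolding simple_portfolio_def nonanticipating_def by blast
qed

lemma sum_truncated_min:
  fixes n N j :: nat
  assumes "n \<le> N"
  shows "(\<Sum>i<min j N. if i < n then X i else 0) = (\<Sum>i<min j n. X i :: real)"
proof -
  have "{i \<in> {..<min j N}. i < n} = {..<min j n}" using assms by auto
  then show ?thesis by (simp add: sum.inter_filter[symmetric])
qed

lemma wealth_lincomb:
  "wealth (a * V + b * V') (max n n') (lincomb_strategy a n H b n' H') j S =
     a * wealth V n H j S + b * wealth V' n' H' j S"
proof -
  let ?D = "\<lambda>i. S (Suc i) - S i"
  have "(\<Sum>i<min j (max n n'). lincomb_strategy a n H b n' H' i S * ?D i) =
      a * (\<Sum>i<min j (max n n'). if i < n then H i S * ?D i else 0)
    + b * (\<Sum>i<min j (max n n'). if i < n' then H' i S * ?D i else 0)"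
  proof -
    have "lincomb_strategy a n H b n' H' i S * ?D i =
        a * (if i < n then H i S * ?D i else 0) + b * (if i < n' then H' i S * ?D i else 0)" for i
      by (simp add: lincomb_strategy_def algebra_simps)
    then show ?thesis by (simp add: sum.distrib sum_distrib_left)
  qed
  also have "\<dots> = a * (\<Sum>i<min j n. H i S * ?D i) + b * (\<Sum>i<min j n'. H' i S * ?D i)"
    by (simp add: sum_truncated_min)
  finally show ?thesis unfolding wealth_def by (simp add: algebra_simps)
qed

lemma wealth_eq_wealth_inf: "n \<le> j \<Longrightarrow> wealth V n H j S = wealth_inf V n H S"
  by (simp add: wealth_def wealth_inf_def min_absorb2)

lemma wealth_inf_lincomb:
  "wealth_inf (a * V + b * V') (max n n') (lincomb_strategy a n H b n' H') S =
     a * wealth_inf V n H S + b * wealth_inf V' n' H' S"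
  unfolding wealth_inf_def wealth_lincomb by (simp add: wealth_eq_wealth_inf)

definition superhedgeable :: "traj set \<Rightarrow> (traj \<Rightarrow> real) \<Rightarrow> real \<Rightarrow> bool" where
  "superhedgeable \<S> h x \<longleftrightarrow> (\<exists>V n H. pos_gen_portfolio \<S> V n H
     \<and> superhedges \<S> (\<lambda>S. ereal (h S)) V n H \<and> endowment V \<le> ereal x)"

lemma pos_gen_portfolio_initial_zero:
  assumes "\<S> \<noteq> {}" "pos_gen_portfolio \<S> V n H"
  shows "V 0 = 0"
proof -
  obtain S where "S \<in> \<S>" using assms(1) by blast
  then have "wealth (V 0) (n 0) (H 0) 0 S = 0" using assms(2) by (simp add: pos_gen_portfolio_def)
  then show ?thesis by (simp add: wealth_def)
qed

lemma pos_gen_portfolio_nonneg: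
  assumes "pos_gen_portfolio \<S> V n H"
  shows "0 \<le> V (Suc m)" "S \<in> \<S> \<Longrightarrow> 0 \<le> wealth_inf (V (Suc m)) (n (Suc m)) (H (Suc m)) S"
  using assms by (auto simp: pos_gen_portfolio_def gen_portfolio_def positive_sp_def)

lemma endowment_pos_gen_portfolio:
  assumes "\<S> \<noteq> {}" "pos_gen_portfolio \<S> V n H"
  shows "endowment V = (\<Sum>m. ereal (V (Suc m)))"
  using pos_gen_portfolio_initial_zero[OF assms] by (simp add: endowment_def)

lemma endowment_pos_gen_portfolio_nonneg:
  assumes "\<S> \<noteq> {}" "pos_gen_portfolio \<S> V n H"
  shows "0 \<le> endowment V"
  unfolding endowment_pos_gen_portfolio[OF assms]
  using pos_gen_portfolio_nonneg(1)[OF assms(2)] by (intro suminf_0_le) auto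

lemma gp_value_pos_gen_portfolio:
  assumes "pos_gen_portfolio \<S> V n H" "S \<in> \<S>"
  shows "gp_value V n H S = (\<Sum>m. ereal (wealth_inf (V (Suc m)) (n (Suc m)) (H (Suc m)) S))"
  using assms by (simp add: gp_value_def pos_gen_portfolio_def wealth_inf_def zero_ereal_def[symmetric])

lemma pos_gen_portfolio_lincomb:
  assumes "0 \<le> a" "0 \<le> b" "pos_gen_portfolio \<S> V n H" "pos_gen_portfolio \<S> V' n' H'"
  shows "pos_gen_portfolio \<S> (\<lambda>m. a * V m + b * V' m) (\<lambda>m. max (n m) (n' m))
           (\<lambda>m. lincomb_strategy a (n m) (H m) b (n' m) (H' m))"
proof -
  have "simple_portfolio \<S> (max (n m) (n' m)) (lincomb_strategy a (n m) (H m) b (n' m) (H' m))" for m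
    using assms(3,4) by (intro simple_portfolio_lincomb) (auto simp: pos_gen_portfolio_def gen_portfolio_def)
  moreover have "positive_sp \<S> (a * V m + b * V' m) (max (n m) (n' m))
      (lincomb_strategy a (n m) (H m) b (n' m) (H' m))" if m: "1 \<le> m" for m
  proof -
    obtain k where "m = Suc k" using m by (cases m) auto
    then show ?thesis
      using pos_gen_portfolio_nonneg[OF assms(3), where m = k] pos_gen_portfolio_nonneg[OF assms(4), where m = k] assms(1,2)
      by (simp add: positive_sp_def wealth_inf_lincomb)
  qed
  moreover have "wealth (a * V 0 + b * V' 0) (max (n 0) (n' 0))
      (lincomb_strategy a (n 0) (H 0) b (n' 0) (H' 0)) j S = 0" if "S \<in> \<S>" for j S
    using assms(3,4) that by (simp add: wealth_lincomb pos_gen_portfolio_def)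
  ultimately show ?thesis by (simp add: pos_gen_portfolio_def gen_portfolio_def)
qed

lemma superhedgeable_lincomb:
  assumes ne: "\<S> \<noteq> {}" and a: "0 \<le> a" and b: "0 \<le> b"
    and h: "superhedgeable \<S> h x" and h': "superhedgeable \<S> h' x'"
  shows "superhedgeable \<S> (\<lambda>S. a * h S + b * h' S) (a * x + b * x')"
proof -
  obtain V n H where V: "pos_gen_portfolio \<S> V n H" "superhedges \<S> (\<lambda>S. ereal (h S)) V n H"
      "endowment V \<le> ereal x" using h unfolding superhedgeable_def by blast
  obtain V' n' H' where V': "pos_gen_portfolio \<S> V' n' H'" "superhedges \<S> (\<lambda>S. ereal (h' S)) V' n' H'"
      "endowment V' \<le> ereal x'" using h' unfolding superhedgeable_def by blast
  let ?V = "\<lambda>m. a * V m + b * V' m"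
  let ?n = "\<lambda>m. max (n m) (n' m)"
  let ?H = "\<lambda>m. lincomb_strategy a (n m) (H m) b (n' m) (H' m)"
  have P: "pos_gen_portfolio \<S> ?V ?n ?H" by (rule pos_gen_portfolio_lincomb[OF a b V(1) V'(1)])
  have "ereal (a * h S + b * h' S) \<le> gp_value ?V ?n ?H S" if S: "S \<in> \<S>" for S
  proof -
    have "ereal (a * h S + b * h' S) = ereal a * ereal (h S) + ereal b * ereal (h' S)" by simp
    also have "\<dots> \<le> ereal a * gp_value V n H S + ereal b * gp_value V' n' H' S"
      using V(2) V'(2) S a b unfolding superhedges_def by (intro add_mono ereal_mult_left_mono) auto
    also have "\<dots> = gp_value ?V ?n ?H S"
      unfolding gp_value_pos_gen_portfolio[OF V(1) S] gp_value_pos_gen_portfolio[OF V'(1) S]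
        gp_value_pos_gen_portfolio[OF P S] wealth_inf_lincomb
      using pos_gen_portfolio_nonneg(2)[OF V(1) S] pos_gen_portfolio_nonneg(2)[OF V'(1) S] a b
      by (intro suminf_ereal_lincomb[symmetric])
    finally show ?thesis .
  qed
  moreover have "endowment ?V \<le> ereal (a * x + b * x')"
  proof -
    have "endowment ?V = ereal a * endowment V + ereal b * endowment V'"
      unfolding endowment_pos_gen_portfolio[OF ne P] endowment_pos_gen_portfolio[OF ne V(1)]
        endowment_pos_gen_portfolio[OF ne V'(1)]
      using pos_gen_portfolio_nonneg(1)[OF V(1)] pos_gen_portfolio_nonneg(1)[OF V'(1)] a b
      by (intro suminf_ereal_lincomb)
    also have "\<dots> \<le> ereal a * ereal x + ereal b * ereal x'"
      using V(3) V'(3) a b by (intro add_mono ereal_mult_left_mono) auto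
    finally show ?thesis by simp
  qed
  ultimately show ?thesis using P unfolding superhedgeable_def superhedges_def by blast
qed

lemma superhedgeable_mono:
  assumes "superhedgeable \<S> h x" "\<And>S. S \<in> \<S> \<Longrightarrow> h' S \<le> h S" "x \<le> y"
  shows "superhedgeable \<S> h' y"
proof -
  obtain V n H where V: "pos_gen_portfolio \<S> V n H" "superhedges \<S> (\<lambda>S. ereal (h S)) V n H"
      "endowment V \<le> ereal x" using assms(1) unfolding superhedgeable_def by blast
  have "superhedges \<S> (\<lambda>S. ereal (h' S)) V n H"
    using V(2) assms(2) unfolding superhedges_def by (meson ereal_less_eq(3) order_trans)
  moreover have "endowment V \<le> ereal y" using V(3) assms(3) by (meson ereal_less_eq(3) order_trans)
  ultimately show ?thesis using V(1) unfolding superhedgeable_def by blast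
qed

lemma superhedgeable_const:
  assumes "\<And>S. S \<in> \<S> \<Longrightarrow> h S \<le> c" "0 \<le> c"
  shows "superhedgeable \<S> h c"
proof -
  let ?V = "\<lambda>m::nat. if m = 1 then c else 0"
  have sum: "(\<Sum>m. ereal (?V (Suc m))) = ereal c"
    by (subst suminf_finite[of "{0}"]) auto
  have "pos_gen_portfolio \<S> ?V (\<lambda>_. 1) (\<lambda>_ _ _. 0)"
    using assms(2) by (simp add: pos_gen_portfolio_def gen_portfolio_def simple_portfolio_def
        nonanticipating_def positive_sp_def wealth_inf_def wealth_def)
  moreover have "superhedges \<S> (\<lambda>S. ereal (h S)) ?V (\<lambda>_. 1) (\<lambda>_ _ _. 0)"
    using assms(1) sum by (simp add: superhedges_def gp_value_def wealth_inf_def wealth_def)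
  moreover have "endowment ?V \<le> ereal c" using sum by (simp add: endowment_def)
  ultimately show ?thesis unfolding superhedgeable_def by blast
qed

lemma superhedgeable_add:
  assumes "\<S> \<noteq> {}" "superhedgeable \<S> h x" "superhedgeable \<S> h' x'"
    "\<And>S. S \<in> \<S> \<Longrightarrow> g S \<le> h S + h' S"
  shows "superhedgeable \<S> g (x + x')"
  using superhedgeable_lincomb[OF assms(1) _ _ assms(2,3), of 1 1] assms(4)
  by (auto intro: superhedgeable_mono)

lemma superhedgeable_abs_lincomb:
  assumes "\<S> \<noteq> {}" "superhedgeable \<S> (\<lambda>S. \<bar>f S\<bar>) x" "superhedgeable \<S> (\<lambda>S. \<bar>g S\<bar>) y"
  shows "superhedgeable \<S> (\<lambda>S. \<bar>a * f S + b * g S\<bar>) (\<bar>a\<bar> * x + \<bar>b\<bar> * y)"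
proof -
  have "\<bar>a * f S + b * g S\<bar> \<le> \<bar>a\<bar> * \<bar>f S\<bar> + \<bar>b\<bar> * \<bar>g S\<bar>" for S
    by (metis abs_mult abs_triangle_ineq)
  then show ?thesis
    using superhedgeable_lincomb[OF assms(1) _ _ assms(2,3), of "\<bar>a\<bar>" "\<bar>b\<bar>"]
    by (auto intro: superhedgeable_mono)
qed

lemma superhedgeable_imp_normL_le:
  assumes "superhedgeable \<S> (\<lambda>S. \<bar>f S\<bar>) x"
  shows "normL \<S> f \<le> ereal x"
proof -
  obtain V n H where V: "pos_gen_portfolio \<S> V n H" "superhedges \<S> (\<lambda>S. ereal \<bar>f S\<bar>) V n H"
      "endowment V \<le> ereal x" using assms unfolding superhedgeable_def by blast
  have "normL \<S> f \<le> endowment V"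
    unfolding normL_def Ibar_def using V(1,2) by (intro Inf_lower) blast
  then show ?thesis using V(3) by (rule order_trans)
qed

lemma normL_less_imp_superhedgeable:
  assumes "normL \<S> f < ereal x"
  shows "superhedgeable \<S> (\<lambda>S. \<bar>f S\<bar>) x"
  using assms unfolding normL_def Ibar_def superhedgeable_def Inf_less_iff
  by (blast intro: less_imp_le)

lemma normL_finite_iff: "normL \<S> f < \<infinity> \<longleftrightarrow> (\<exists>x. superhedgeable \<S> (\<lambda>S. \<bar>f S\<bar>) x)"
proof
  assume "normL \<S> f < \<infinity>"
  then obtain n :: nat where "normL \<S> f < ereal (real n)" using less_PInf_Ex_of_nat by auto
  then show "\<exists>x. superhedgeable \<S> (\<lambda>S. \<bar>f S\<bar>) x" using normL_less_imp_superhedgeable by blast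
next
  assume "\<exists>x. superhedgeable \<S> (\<lambda>S. \<bar>f S\<bar>) x"
  then obtain x where "normL \<S> f \<le> ereal x" using superhedgeable_imp_normL_le by blast
  moreover have "ereal x < \<infinity>" by simp
  ultimately show "normL \<S> f < \<infinity>" by (rule le_less_trans)
qed

lemma normL_nonneg:
  assumes "\<S> \<noteq> {}"
  shows "0 \<le> normL \<S> f"
  unfolding normL_def Ibar_def using endowment_pos_gen_portfolio_nonneg[OF assms]
  by (auto intro: Inf_greatest)

definition replicable :: "traj set \<Rightarrow> (traj \<Rightarrow> real) \<Rightarrow> real \<Rightarrow> bool" where
  "replicable \<S> f V \<longleftrightarrow> (\<exists>n H. simple_portfolio \<S> n H \<and> (\<forall>S\<in>\<S>. f S = wealth_inf V n H S))"

lemma replicable_lincomb: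
  assumes "replicable \<S> f V" "replicable \<S> g W"
  shows "replicable \<S> (\<lambda>S. a * f S + b * g S) (a * V + b * W)"
  using assms simple_portfolio_lincomb unfolding replicable_def
  by (metis (no_types, lifting) wealth_inf_lincomb)

lemma replicable_const: "replicable \<S> (\<lambda>S. c) c"
  unfolding replicable_def
  by (rule exI[of _ 1], rule exI[of _ "\<lambda>_ _. 0"])
     (simp add: simple_portfolio_def nonanticipating_def wealth_inf_def wealth_def)

lemma in_E'_iff:
  "in_E' \<S> g \<longleftrightarrow> (\<exists>V. replicable \<S> g V) \<and> (\<exists>x. superhedgeable \<S> (\<lambda>S. \<bar>g S\<bar>) x)"
  unfolding in_E'_def in_E_def replicable_def normL_finite_iff by blast

lemma L1_L_iff:
  assumes ne: "\<S> \<noteq> {}"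
  shows "L1_L \<S> f \<longleftrightarrow> (\<exists>x. superhedgeable \<S> (\<lambda>S. \<bar>f S\<bar>) x) \<and>
    (\<forall>e>0. \<exists>g V. replicable \<S> g V \<and> superhedgeable \<S> (\<lambda>S. \<bar>f S - g S\<bar>) e)"
proof
  assume f: "L1_L \<S> f"
  have "\<exists>g V. replicable \<S> g V \<and> superhedgeable \<S> (\<lambda>S. \<bar>f S - g S\<bar>) e" if e: "0 < e" for e
  proof -
    obtain g where "in_E' \<S> g" "normL \<S> (\<lambda>S. f S - g S) < ereal e"
      using f e unfolding L1_L_def by blast
    then show ?thesis using normL_less_imp_superhedgeable unfolding in_E'_iff by blast
  qed
  then show "(\<exists>x. superhedgeable \<S> (\<lambda>S. \<bar>f S\<bar>) x) \<and>
      (\<forall>e>0. \<exists>g V. replicable \<S> g V \<and> superhedgeable \<S> (\<lambda>S. \<bar>f S - g S\<bar>) e)"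
    using f unfolding L1_L_def normL_finite_iff by blast
next
  assume "(\<exists>x. superhedgeable \<S> (\<lambda>S. \<bar>f S\<bar>) x) \<and>
      (\<forall>e>0. \<exists>g V. replicable \<S> g V \<and> superhedgeable \<S> (\<lambda>S. \<bar>f S - g S\<bar>) e)"
  then obtain x where x: "superhedgeable \<S> (\<lambda>S. \<bar>f S\<bar>) x"
    and approx: "\<And>e. 0 < e \<Longrightarrow> \<exists>g V. replicable \<S> g V \<and> superhedgeable \<S> (\<lambda>S. \<bar>f S - g S\<bar>) e"
    by blast
  have "\<exists>g. in_E' \<S> g \<and> normL \<S> (\<lambda>S. f S - g S) < ereal e" if e: "0 < e" for e
  proof -
    obtain g V where g: "replicable \<S> g V" "superhedgeable \<S> (\<lambda>S. \<bar>f S - g S\<bar>) (e / 2)"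
      using approx e by (meson half_gt_zero)
    have "superhedgeable \<S> (\<lambda>S. \<bar>g S\<bar>) (x + e / 2)"
      by (rule superhedgeable_add[OF ne x g(2)]) arith
    then have "in_E' \<S> g" using g(1) unfolding in_E'_iff by blast
    moreover have "normL \<S> (\<lambda>S. f S - g S) < ereal e"
      using superhedgeable_imp_normL_le[OF g(2)] e by (simp add: le_less_trans)
    ultimately show ?thesis by blast
  qed
  then show "L1_L \<S> f" using x unfolding L1_L_def normL_finite_iff by blast
qed

lemma L1_L_lincomb:
  assumes ne: "\<S> \<noteq> {}" and f: "L1_L \<S> f" and g: "L1_L \<S> g"
  shows "L1_L \<S> (\<lambda>S. a * f S + b * g S)"
  unfolding L1_L_iff[OF ne]
proof (intro conjI allI impI)
  obtain x y where "superhedgeable \<S> (\<lambda>S. \<bar>f S\<bar>) x" "superhedgeable \<S> (\<lambda>S. \<bar>g S\<bar>) y"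
    using f g unfolding L1_L_iff[OF ne] by blast
  then show "\<exists>z. superhedgeable \<S> (\<lambda>S. \<bar>a * f S + b * g S\<bar>) z"
    using superhedgeable_abs_lincomb[OF ne] by blast
next
  fix e :: real assume e: "0 < e"
  define \<eta> where "\<eta> = e / (\<bar>a\<bar> + \<bar>b\<bar> + 1)"
  have \<eta>: "0 < \<eta>" using e by (simp add: \<eta>_def add_nonneg_pos)
  have "\<bar>a\<bar> * \<eta> + \<bar>b\<bar> * \<eta> \<le> (\<bar>a\<bar> + \<bar>b\<bar> + 1) * \<eta>"
    using \<eta> by (simp add: algebra_simps)
  also have "\<dots> = e" by (simp add: \<eta>_def add_nonneg_pos)
  finally have \<eta>_le: "\<bar>a\<bar> * \<eta> + \<bar>b\<bar> * \<eta> \<le> e" .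
  obtain f' V where f': "replicable \<S> f' V" "superhedgeable \<S> (\<lambda>S. \<bar>f S - f' S\<bar>) \<eta>"
    using f \<eta> unfolding L1_L_iff[OF ne] by blast
  obtain g' W where g': "replicable \<S> g' W" "superhedgeable \<S> (\<lambda>S. \<bar>g S - g' S\<bar>) \<eta>"
    using g \<eta> unfolding L1_L_iff[OF ne] by blast
  have "superhedgeable \<S> (\<lambda>S. \<bar>a * (f S - f' S) + b * (g S - g' S)\<bar>) (\<bar>a\<bar> * \<eta> + \<bar>b\<bar> * \<eta>)"
    by (rule superhedgeable_abs_lincomb[OF ne f'(2) g'(2)])
  then have "superhedgeable \<S> (\<lambda>S. \<bar>(a * f S + b * g S) - (a * f' S + b * g' S)\<bar>) e"
    by (rule superhedgeable_mono[OF _ _ \<eta>_le]) (simp add: algebra_simps)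
  then show "\<exists>h V. replicable \<S> h V \<and> superhedgeable \<S> (\<lambda>S. \<bar>a * f S + b * g S - h S\<bar>) e"
    using replicable_lincomb[OF f'(1) g'(1)] by blast
qed

lemma L1_L_const:
  assumes "\<S> \<noteq> {}"
  shows "L1_L \<S> (\<lambda>S. c)"
proof -
  have "superhedgeable \<S> (\<lambda>S. \<bar>c\<bar>) \<bar>c\<bar>"
    by (rule superhedgeable_const) auto
  moreover have "superhedgeable \<S> (\<lambda>S. \<bar>c - c\<bar>) e" if "0 < e" for e
    using that by (intro superhedgeable_const) auto
  ultimately show ?thesis
    unfolding L1_L_iff[OF assms] using replicable_const by blast
qed

lemma L1_L_approximating_sequence:
  assumes "\<S> \<noteq> {}" "L1_L \<S> f"
  obtains h where "\<And>k. in_E' \<S> (h k)" "(\<lambda>k. normL \<S> (\<lambda>S. f S - h k S)) \<longlonglongrightarrow> 0"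
proof -
  have "\<forall>k. \<exists>g. in_E' \<S> g \<and> normL \<S> (\<lambda>S. f S - g S) < ereal (1 / Suc k)"
    using assms(2) unfolding L1_L_def by simp
  from choice[OF this] obtain h
    where h: "\<And>k. in_E' \<S> (h k)" "\<And>k. normL \<S> (\<lambda>S. f S - h k S) < ereal (1 / Suc k)"
    by blast
  have "(\<lambda>k. ereal (1 / Suc k)) \<longlonglongrightarrow> ereal 0"
    by (intro tendsto_ereal LIMSEQ_Suc[OF lim_1_over_n])
  then have lim: "(\<lambda>k. ereal (1 / Suc k)) \<longlonglongrightarrow> 0"
    by (simp only: zero_ereal_def)
  have "(\<lambda>k. normL \<S> (\<lambda>S. f S - h k S)) \<longlonglongrightarrow> 0"
  proof (rule tendsto_sandwich[OF _ _ tendsto_const lim])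
    show "\<forall>\<^sub>F k in sequentially. 0 \<le> normL \<S> (\<lambda>S. f S - h k S)"
      using normL_nonneg[OF assms(1)] by simp
    show "\<forall>\<^sub>F k in sequentially. normL \<S> (\<lambda>S. f S - h k S) \<le> ereal (1 / Suc k)"
      using h(2) by (simp add: less_imp_le)
  qed
  then show ?thesis using h(1) that by blast
qed

locale no_arbitrage =
  fixes \<S> :: "traj set"
  assumes sigma_bar_zero_nonneg: "0 \<le> sigma_bar \<S> (\<lambda>S. 0)"
begin

lemma nonempty: "\<S> \<noteq> {}"
proof
  assume empty: "\<S> = {}"
  let ?V = "\<lambda>m::nat. if m = 0 then - 1 else 0"
  have "gen_portfolio \<S> ?V (\<lambda>_. 1) (\<lambda>_ _ _. 0)" "superhedges \<S> (\<lambda>S. 0) ?V (\<lambda>_. 1) (\<lambda>_ _ _. 0)"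
    using empty by (simp_all add: gen_portfolio_def simple_portfolio_def nonanticipating_def
        positive_sp_def superhedges_def)
  then have "sigma_bar \<S> (\<lambda>S. 0) \<le> endowment ?V"
    unfolding sigma_bar_def by (intro Inf_lower) blast
  also have "endowment ?V = ereal (- 1)" by (simp add: endowment_def zero_ereal_def[symmetric])
  finally have "0 \<le> ereal (- 1)" by (rule order_trans[OF sigma_bar_zero_nonneg])
  then show False by simp
qed

lemma replicable_superhedgeable_nonneg:
  assumes g: "replicable \<S> g V" and h: "superhedgeable \<S> h x"
    and nonneg: "\<And>S. S \<in> \<S> \<Longrightarrow> 0 \<le> g S + h S"
  shows "0 \<le> V + x"
proof -
  obtain n H where nH: "simple_portfolio \<S> n H" "\<And>S. S \<in> \<S> \<Longrightarrow> g S = wealth_inf V n H S"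
    using g unfolding replicable_def by blast
  obtain W m K where W: "pos_gen_portfolio \<S> W m K" "superhedges \<S> (\<lambda>S. ereal (h S)) W m K"
      "endowment W \<le> ereal x" using h unfolding superhedgeable_def by blast
  \<comment> \<open>Replacing the null component of the positive portfolio by the simple portfolio of g
      superhedges 0 with endowment V + endowment W.\<close>
  let ?W = "W(0 := V)" and ?m = "m(0 := n)" and ?K = "K(0 := H)"
  have "gen_portfolio \<S> ?W ?m ?K"
    using W(1) nH(1) by (simp add: gen_portfolio_def pos_gen_portfolio_def)
  moreover have "superhedges \<S> (\<lambda>S. 0) ?W ?m ?K"
    unfolding superhedges_def
  proof
    fix S assume S: "S \<in> \<S>"
    have "0 \<le> ereal (g S) + ereal (h S)" using nonneg[OF S] by simp
    also have "\<dots> \<le> ereal (g S) + gp_value W m K S"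
      using W(2) S unfolding superhedges_def by (intro add_left_mono) blast
    also have "\<dots> = gp_value ?W ?m ?K S"
      using nH(2)[OF S] unfolding gp_value_pos_gen_portfolio[OF W(1) S] by (simp add: gp_value_def)
    finally show "0 \<le> gp_value ?W ?m ?K S" .
  qed
  ultimately have "sigma_bar \<S> (\<lambda>S. 0) \<le> endowment ?W"
    unfolding sigma_bar_def by (intro Inf_lower) blast
  also have "endowment ?W = ereal V + endowment W"
    unfolding endowment_pos_gen_portfolio[OF nonempty W(1)] by (simp add: endowment_def)
  also have "\<dots> \<le> ereal V + ereal x" using W(3) by (intro add_left_mono)
  finally have "0 \<le> ereal V + ereal x" by (rule order_trans[OF sigma_bar_zero_nonneg])
  then show ?thesis by simp
qed

lemma replicable_price_dist_le:
  assumes "replicable \<S> g V" "replicable \<S> g' V'" "superhedgeable \<S> (\<lambda>S. \<bar>g S - g' S\<bar>) x"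
  shows "\<bar>V - V'\<bar> \<le> x"
proof -
  have "0 \<le> 1 * V + (- 1) * V' + x"
    by (rule replicable_superhedgeable_nonneg[OF replicable_lincomb[OF assms(1,2)] assms(3)]) arith
  moreover have "0 \<le> 1 * V' + (- 1) * V + x"
    by (rule replicable_superhedgeable_nonneg[OF replicable_lincomb[OF assms(2,1)] assms(3)]) arith
  ultimately show ?thesis by linarith
qed

lemma I_E_eq:
  assumes "replicable \<S> f V"
  shows "I_E \<S> f = V"
proof -
  have "W = V" if "replicable \<S> f W" for W
    using replicable_price_dist_le[OF that assms superhedgeable_const[of _ "\<lambda>S. \<bar>f S - f S\<bar>" 0]]
    by simp
  then show ?thesis
    using assms unfolding I_E_def replicable_def[symmetric] by (intro the_equality)
qed

lemma integral_L_approx: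
  assumes f: "L1_L \<S> f" and g: "replicable \<S> g V"
    and fg: "superhedgeable \<S> (\<lambda>S. \<bar>f S - g S\<bar>) x"
  shows "\<bar>integral_L \<S> f - V\<bar> \<le> x"
proof -
  let ?approx = "\<lambda>V x. \<exists>g. replicable \<S> g V \<and> superhedgeable \<S> (\<lambda>S. \<bar>f S - g S\<bar>) x"
  have "\<exists>c. \<forall>V x. ?approx V x \<longrightarrow> \<bar>c - V\<bar> \<le> x"
  proof (rule ex_common_point_of_intervals)
    fix V x W y assume "?approx V x" "?approx W y"
    then obtain g h where "replicable \<S> g V" "superhedgeable \<S> (\<lambda>S. \<bar>f S - g S\<bar>) x"
      "replicable \<S> h W" "superhedgeable \<S> (\<lambda>S. \<bar>f S - h S\<bar>) y" by blast
    moreover from this(2,4) have "superhedgeable \<S> (\<lambda>S. \<bar>g S - h S\<bar>) (x + y)"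
      by (rule superhedgeable_add[OF nonempty]) arith
    ultimately have "\<bar>V - W\<bar> \<le> x + y" by (intro replicable_price_dist_le)
    then show "V - x \<le> W + y" by linarith
  next
    show "?approx V x" using g fg by blast
  qed
  then obtain c where c: "\<And>g V x. replicable \<S> g V \<Longrightarrow> superhedgeable \<S> (\<lambda>S. \<bar>f S - g S\<bar>) x
      \<Longrightarrow> \<bar>c - V\<bar> \<le> x" by blast
  have I_E_tendsto: "(\<lambda>k. I_E \<S> (h k)) \<longlonglongrightarrow> c"
    if h: "\<And>k. in_E' \<S> (h k)" "(\<lambda>k. normL \<S> (\<lambda>S. f S - h k S)) \<longlonglongrightarrow> 0" for h
  proof (rule tendstoI)
    fix e :: real assume e: "0 < e"
    have "\<forall>\<^sub>F k in sequentially. normL \<S> (\<lambda>S. f S - h k S) < ereal (e / 2)"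
      using e by (intro order_tendstoD(2)[OF h(2)]) simp
    then show "\<forall>\<^sub>F k in sequentially. dist (I_E \<S> (h k)) c < e"
    proof (rule eventually_mono)
      fix k assume "normL \<S> (\<lambda>S. f S - h k S) < ereal (e / 2)"
      moreover obtain W where "replicable \<S> (h k) W" using h(1) unfolding in_E'_iff by blast
      ultimately have "\<bar>c - I_E \<S> (h k)\<bar> \<le> e / 2"
        by (metis I_E_eq c normL_less_imp_superhedgeable)
      then show "dist (I_E \<S> (h k)) c < e" using e by (simp add: dist_real_def abs_minus_commute)
    qed
  qed
  have "integral_L \<S> f = c"
    unfolding integral_L_def
  proof (rule the_equality)
    obtain h where "\<And>k. in_E' \<S> (h k)" "(\<lambda>k. normL \<S> (\<lambda>S. f S - h k S)) \<longlonglongrightarrow> 0"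
      using L1_L_approximating_sequence[OF nonempty f] by blast
    then show "\<exists>h. (\<forall>k. in_E' \<S> (h k)) \<and> (\<lambda>k. normL \<S> (\<lambda>S. f S - h k S)) \<longlonglongrightarrow> 0
        \<and> (\<lambda>k. I_E \<S> (h k)) \<longlonglongrightarrow> c" using I_E_tendsto by blast
  next
    fix d assume "\<exists>h. (\<forall>k. in_E' \<S> (h k)) \<and> (\<lambda>k. normL \<S> (\<lambda>S. f S - h k S)) \<longlonglongrightarrow> 0
        \<and> (\<lambda>k. I_E \<S> (h k)) \<longlonglongrightarrow> d"
    then show "d = c" using I_E_tendsto LIMSEQ_unique by blast
  qed
  then show ?thesis using c[OF g fg] by simp
qed

lemma integral_L_lincomb:
  assumes f: "L1_L \<S> f" and g: "L1_L \<S> g"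
  shows "integral_L \<S> (\<lambda>S. a * f S + b * g S) = a * integral_L \<S> f + b * integral_L \<S> g"
proof (rule eq_if_dist_le_mult_eps)
  fix \<eta> :: real assume \<eta>: "0 < \<eta>"
  obtain f' V where f': "replicable \<S> f' V" "superhedgeable \<S> (\<lambda>S. \<bar>f S - f' S\<bar>) \<eta>"
    using f \<eta> unfolding L1_L_iff[OF nonempty] by blast
  obtain g' W where g': "replicable \<S> g' W" "superhedgeable \<S> (\<lambda>S. \<bar>g S - g' S\<bar>) \<eta>"
    using g \<eta> unfolding L1_L_iff[OF nonempty] by blast
  have "superhedgeable \<S> (\<lambda>S. \<bar>a * (f S - f' S) + b * (g S - g' S)\<bar>) (\<bar>a\<bar> * \<eta> + \<bar>b\<bar> * \<eta>)"
    by (rule superhedgeable_abs_lincomb[OF nonempty f'(2) g'(2)])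
  then have "superhedgeable \<S> (\<lambda>S. \<bar>(a * f S + b * g S) - (a * f' S + b * g' S)\<bar>) (\<bar>a\<bar> * \<eta> + \<bar>b\<bar> * \<eta>)"
    by (rule superhedgeable_mono) (simp_all add: algebra_simps)
  then have "\<bar>integral_L \<S> (\<lambda>S. a * f S + b * g S) - (a * V + b * W)\<bar> \<le> \<bar>a\<bar> * \<eta> + \<bar>b\<bar> * \<eta>"
    by (rule integral_L_approx[OF L1_L_lincomb[OF nonempty f g] replicable_lincomb[OF f'(1) g'(1)]])
  moreover have "\<bar>a * integral_L \<S> f - a * V\<bar> \<le> \<bar>a\<bar> * \<eta>"
  proof -
    have "\<bar>a * integral_L \<S> f - a * V\<bar> = \<bar>a\<bar> * \<bar>integral_L \<S> f - V\<bar>"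
      by (simp add: abs_mult flip: right_diff_distrib)
    also have "\<dots> \<le> \<bar>a\<bar> * \<eta>" by (intro mult_left_mono integral_L_approx[OF f f']) simp
    finally show ?thesis .
  qed
  moreover have "\<bar>b * integral_L \<S> g - b * W\<bar> \<le> \<bar>b\<bar> * \<eta>"
  proof -
    have "\<bar>b * integral_L \<S> g - b * W\<bar> = \<bar>b\<bar> * \<bar>integral_L \<S> g - W\<bar>"
      by (simp add: abs_mult flip: right_diff_distrib)
    also have "\<dots> \<le> \<bar>b\<bar> * \<eta>" by (intro mult_left_mono integral_L_approx[OF g g']) simp
    finally show ?thesis .
  qed
  moreover have "2 * (\<bar>a\<bar> + \<bar>b\<bar>) * \<eta> = 2 * (\<bar>a\<bar> * \<eta>) + 2 * (\<bar>b\<bar> * \<eta>)"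
    by (simp add: algebra_simps)
  ultimately show "\<bar>integral_L \<S> (\<lambda>S. a * f S + b * g S) - (a * integral_L \<S> f + b * integral_L \<S> g)\<bar>
      \<le> 2 * (\<bar>a\<bar> + \<bar>b\<bar>) * \<eta>"
    unfolding abs_le_iff by linarith
qed

lemma integral_L_nonneg:
  assumes f: "L1_L \<S> f" and nonneg: "\<And>S. S \<in> \<S> \<Longrightarrow> 0 \<le> f S"
  shows "0 \<le> integral_L \<S> f"
proof (rule field_le_epsilon)
  fix e :: real assume "0 < e"
  then obtain g V where g: "replicable \<S> g V" "superhedgeable \<S> (\<lambda>S. \<bar>f S - g S\<bar>) (e / 2)"
    using f unfolding L1_L_iff[OF nonempty] by (meson half_gt_zero)
  have "0 \<le> V + e / 2"
  proof (rule replicable_superhedgeable_nonneg[OF g])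
    show "0 \<le> g S + \<bar>f S - g S\<bar>" if "S \<in> \<S>" for S using nonneg[OF that] by arith
  qed
  moreover have "\<bar>integral_L \<S> f - V\<bar> \<le> e / 2" by (rule integral_L_approx[OF f g])
  ultimately show "0 \<le> integral_L \<S> f + e" by linarith
qed

lemma integral_L_dist_le:
  assumes f: "L1_L \<S> f" and g: "L1_L \<S> g"
    and fg: "superhedgeable \<S> (\<lambda>S. \<bar>g S - f S\<bar>) x"
  shows "\<bar>integral_L \<S> g - integral_L \<S> f\<bar> \<le> x"
proof (rule field_le_epsilon)
  fix e :: real assume "0 < e"
  then obtain f' V where f': "replicable \<S> f' V" "superhedgeable \<S> (\<lambda>S. \<bar>f S - f' S\<bar>) (e / 2)"
    using f unfolding L1_L_iff[OF nonempty] by (meson half_gt_zero)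
  have "superhedgeable \<S> (\<lambda>S. \<bar>g S - f' S\<bar>) (x + e / 2)"
    by (rule superhedgeable_add[OF nonempty fg f'(2)]) arith
  then have "\<bar>integral_L \<S> g - V\<bar> \<le> x + e / 2" by (rule integral_L_approx[OF g f'(1)])
  moreover have "\<bar>integral_L \<S> f - V\<bar> \<le> e / 2" by (rule integral_L_approx[OF f f'])
  ultimately show "\<bar>integral_L \<S> g - integral_L \<S> f\<bar> \<le> x + e" by linarith
qed

lemma integral_L_dist_le_normL:
  assumes "L1_L \<S> f" "L1_L \<S> g"
  shows "ereal \<bar>integral_L \<S> g - integral_L \<S> f\<bar> \<le> normL \<S> (\<lambda>S. g S - f S)"
proof (rule dense_ge)
  fix y assume y: "normL \<S> (\<lambda>S. g S - f S) < y"
  show "ereal \<bar>integral_L \<S> g - integral_L \<S> f\<bar> \<le> y"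
  proof (cases y)
    case (real r)
    then show ?thesis
      using integral_L_dist_le[OF assms normL_less_imp_superhedgeable] y by simp
  qed (use y in auto)
qed

lemma integral_L_const: "integral_L \<S> (\<lambda>S. c) = c"
proof -
  have "\<bar>integral_L \<S> (\<lambda>S. c) - c\<bar> \<le> 0"
    by (rule integral_L_approx[OF L1_L_const[OF nonempty] replicable_const superhedgeable_const]) auto
  then show ?thesis by simp
qed

end

theorem proposition3p4:
  fixes s0 :: real and \<S> :: "(nat \<Rightarrow> real) set"
  assumes "trajectory_set s0 \<S>"
    and "sigma_bar \<S> (\<lambda>S. 0) \<ge> 0"
  shows "(\<forall>f g a b. L1_L \<S> f \<and> L1_L \<S> g \<longrightarrow>
            L1_L \<S> (\<lambda>S. a * f S + b * g S) \<and>
            integral_L \<S> (\<lambda>S. a * f S + b * g S) = a * integral_L \<S> f + b * integral_L \<S> g)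
       \<and> (\<forall>f. L1_L \<S> f \<and> (\<forall>S\<in>\<S>. f S \<ge> 0) \<longrightarrow> integral_L \<S> f \<ge> 0)
       \<and> (\<forall>f. L1_L \<S> f \<longrightarrow> (\<forall>\<epsilon>>0. \<exists>\<delta>>0. \<forall>g. L1_L \<S> g \<and> normL \<S> (\<lambda>S. g S - f S) < ereal \<delta>
                \<longrightarrow> \<bar>integral_L \<S> g - integral_L \<S> f\<bar> < \<epsilon>))
       \<and> (\<forall>c::real. L1_L \<S> (\<lambda>S. c) \<and> integral_L \<S> (\<lambda>S. c) = c)"
proof -
  interpret no_arbitrage \<S> by unfold_locales (rule assms(2))
  have continuous: "\<bar>integral_L \<S> g - integral_L \<S> f\<bar> < \<epsilon>"
    if "L1_L \<S> f" "L1_L \<S> g" "normL \<S> (\<lambda>S. g S - f S) < ereal \<epsilon>" for f g \<epsilon>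
    using le_less_trans[OF integral_L_dist_le_normL[OF that(1,2)] that(3)] by simp
  show ?thesis
  proof (intro conjI allI impI)
    fix f g a b assume "L1_L \<S> f \<and> L1_L \<S> g"
    then show "L1_L \<S> (\<lambda>S. a * f S + b * g S)"
      and "integral_L \<S> (\<lambda>S. a * f S + b * g S) = a * integral_L \<S> f + b * integral_L \<S> g"
      using L1_L_lincomb[OF nonempty] integral_L_lincomb by blast+
  next
    fix f assume "L1_L \<S> f \<and> (\<forall>S\<in>\<S>. 0 \<le> f S)"
    then show "0 \<le> integral_L \<S> f" using integral_L_nonneg by blast
  next
    fix f and \<epsilon> :: real assume "L1_L \<S> f" "0 < \<epsilon>"
    then show "\<exists>\<delta>>0. \<forall>g. L1_L \<S> g \<and> normL \<S> (\<lambda>S. g S - f S) < ereal \<delta>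
        \<longrightarrow> \<bar>integral_L \<S> g - integral_L \<S> f\<bar> < \<epsilon>"
      using continuous by blast
  qed (simp_all add: L1_L_const[OF nonempty] integral_L_const)
qed

end
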